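(* Let $A$ be an associative algebra and $M$ an $A$-bimodule. A collection $\{ T_\alpha : M \to A \}_{\alpha \in \Omega}$ of linear maps is an $\mathcal{O}$-operator family if and only if the collection $\{ \widehat{T}_\alpha : A \oplus M \to A \oplus M \}_{\alpha \in \Omega}$, $\widehat{T}_\alpha(a,u)=(T_\alpha(u),0)$, is a Nijenhuis family on the semidirect product algebra $A \ltimes M$.
   Context: $\Omega$ is a semigroup. An $\mathcal{O}$-operator family is a collection of linear maps $T_\alpha:M\to A$ with $T_\alpha(u) \cdot T_\beta(v) = T_{\alpha\beta}(T_\alpha(u) \cdot v + u \cdot T_\beta(v))$ for all $u,v,\alpha,\beta$. A Nijenhuis family on an algebra $B$ is a collection of linear maps $N_\alpha:B\to B$ with $N_\alpha(x) N_\beta(y) = N_{\alpha \beta} ( N_\alpha (x) y + x N_\beta(y) - N_{\alpha \beta}(x y))$. $A\ltimes M$ is $A\oplus M$ with product $(a, u) \star (b, v) = (a \cdot b, a \cdot v + u \cdot b)$. *)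

theory Defs
  imports Complex_Main "HOL-Library.Product_Plus"
begin

definition assoc_algebra :: "('k::field \<Rightarrow> 'a::ring \<Rightarrow> 'a) \<Rightarrow> bool" where
  "assoc_algebra sA \<longleftrightarrow> vector_space sA \<and>
     (\<forall>c x y. sA c (x * y) = sA c x * y \<and> sA c (x * y) = x * sA c y)"

definition bimodule ::
  "('k::field \<Rightarrow> 'a::ring \<Rightarrow> 'a) \<Rightarrow> ('k \<Rightarrow> 'm::ab_group_add \<Rightarrow> 'm) \<Rightarrow>
   ('a \<Rightarrow> 'm \<Rightarrow> 'm) \<Rightarrow> ('m \<Rightarrow> 'a \<Rightarrow> 'm) \<Rightarrow> bool" where
  "bimodule sA sM l r \<longleftrightarrow> vector_space sM \<and>
     (\<forall>a b u. l (a + b) u = l a u + l b u) \<and>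
     (\<forall>a u v. l a (u + v) = l a u + l a v) \<and>
     (\<forall>u v a. r (u + v) a = r u a + r v a) \<and>
     (\<forall>u a b. r u (a + b) = r u a + r u b) \<and>
     (\<forall>c a u. l (sA c a) u = sM c (l a u) \<and> l a (sM c u) = sM c (l a u)) \<and>
     (\<forall>c u a. r (sM c u) a = sM c (r u a) \<and> r u (sA c a) = sM c (r u a)) \<and>
     (\<forall>a b u. l (a * b) u = l a (l b u)) \<and>
     (\<forall>u a b. r (r u a) b = r u (a * b)) \<and>
     (\<forall>a u b. l a (r u b) = r (l a u) b)"

definition O_operator_family ::
  "('k::field \<Rightarrow> 'a::ring \<Rightarrow> 'a) \<Rightarrow> ('k \<Rightarrow> 'm::ab_group_add \<Rightarrow> 'm) \<Rightarrow>
   ('a \<Rightarrow> 'm \<Rightarrow> 'm) \<Rightarrow> ('m \<Rightarrow> 'a \<Rightarrow> 'm) \<Rightarrow> ('g::semigroup_mult \<Rightarrow> 'm \<Rightarrow> 'a) \<Rightarrow> bool" where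
  "O_operator_family sA sM l r T \<longleftrightarrow>
     (\<forall>\<alpha>. Vector_Spaces.linear sM sA (T \<alpha>)) \<and>
     (\<forall>\<alpha> \<beta> u v. T \<alpha> u * T \<beta> v = T (\<alpha> * \<beta>) (l (T \<alpha> u) v + r u (T \<beta> v)))"

definition Nijenhuis_family ::
  "('k::field \<Rightarrow> 'b::ab_group_add \<Rightarrow> 'b) \<Rightarrow> ('b \<Rightarrow> 'b \<Rightarrow> 'b) \<Rightarrow>
   ('g::semigroup_mult \<Rightarrow> 'b \<Rightarrow> 'b) \<Rightarrow> bool" where
  "Nijenhuis_family s mult N \<longleftrightarrow>
     (\<forall>\<alpha>. Vector_Spaces.linear s s (N \<alpha>)) \<and>
     (\<forall>\<alpha> \<beta> x y. mult (N \<alpha> x) (N \<beta> y) =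
        N (\<alpha> * \<beta>) (mult (N \<alpha> x) y + mult x (N \<beta> y) - N (\<alpha> * \<beta>) (mult x y)))"

definition sd_scale :: "('k \<Rightarrow> 'a \<Rightarrow> 'a) \<Rightarrow> ('k \<Rightarrow> 'm \<Rightarrow> 'm) \<Rightarrow> 'k \<Rightarrow> 'a \<times> 'm \<Rightarrow> 'a \<times> 'm" where
  "sd_scale sA sM c p = (sA c (fst p), sM c (snd p))"

definition sd_mult :: "('a \<Rightarrow> 'm \<Rightarrow> 'm) \<Rightarrow> ('m \<Rightarrow> 'a \<Rightarrow> 'm) \<Rightarrow>
    ('a::ring) \<times> ('m::ab_group_add) \<Rightarrow> 'a \<times> 'm \<Rightarrow> 'a \<times> 'm" where
  "sd_mult l r p q = (fst p * fst q, l (fst p) (snd q) + r (snd p) (fst q))"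

definition hat :: "('g \<Rightarrow> 'm \<Rightarrow> 'a) \<Rightarrow> 'g \<Rightarrow> ('a::zero) \<times> ('m::zero) \<Rightarrow> 'a \<times> 'm" where
  "hat T \<alpha> p = (T \<alpha> (snd p), 0)"

end

theory Submission
  imports Defs
begin

text \<open>Since \<open>hat T\<close> kills the \<open>A\<close>-component and lands in \<open>A \<oplus> 0\<close>, in the Nijenhuis identity
  for \<open>hat T\<close> only the \<open>M\<close>-components of the arguments survive, the correction term
  \<open>N\<^sub>\<alpha>\<^sub>\<beta>(x y)\<close> disappears, and the identity collapses to the \<open>\<O>\<close>-operator identity for \<open>T\<close>.\<close>

lemma vector_space_sd_scale:
  assumes "vector_space sA" and "vector_space sM"
  shows "vector_space (sd_scale sA sM)"
proof -
  interpret A: vector_space sA by fact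
  interpret M: vector_space sM by fact
  show ?thesis
    by unfold_locales
      (auto simp: sd_scale_def A.scale_right_distrib M.scale_right_distrib
        A.scale_left_distrib M.scale_left_distrib)
qed

lemma linear_hat:
  fixes T :: "'g \<Rightarrow> 'm::ab_group_add \<Rightarrow> 'a::ab_group_add"
  assumes "vector_space sA" and "vector_space sM"
    and "Vector_Spaces.linear sM sA (T \<alpha>)"
  shows "Vector_Spaces.linear (sd_scale sA sM) (sd_scale sA sM) (hat T \<alpha>)"
proof -
  interpret A: vector_space sA by fact
  interpret M: vector_space sM by fact
  interpret T: module_hom sM sA "T \<alpha>"
    using assms(3) by (simp add: Vector_Spaces.linear_def)
  show ?thesis
    unfolding Vector_Spaces.linear_def
  proof (intro conjI vector_space_sd_scale assms(1,2))
    show "module_hom (sd_scale sA sM) (sd_scale sA sM) (hat T \<alpha>)"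
      by unfold_locales
        (auto simp: hat_def sd_scale_def T.add T.scale A.scale_right_distrib
          M.scale_right_distrib A.scale_left_distrib M.scale_left_distrib)
  qed
qed

lemma bimodule_left_action_zero:
  assumes "bimodule sA sM l r"
  shows "l a 0 = 0"
proof -
  have "\<forall>a u v. l a (u + v) = l a u + l a v"
    using assms by (simp add: bimodule_def)
  then have "l a (0 + 0) = l a 0 + l a 0" by blast
  then show ?thesis by simp
qed

lemma bimodule_right_action_zero:
  assumes "bimodule sA sM l r"
  shows "r 0 a = 0"
proof -
  have "\<forall>u v a. r (u + v) a = r u a + r v a"
    using assms by (simp add: bimodule_def)
  then have "r (0 + 0) a = r 0 a + r 0 a" by blast
  then show ?thesis by simp
qed

lemma Nijenhuis_identity_hat_iff:
  assumes "\<And>a. l a 0 = 0" and "\<And>a. r 0 a = 0"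
  shows "sd_mult l r (hat T \<alpha> x) (hat T \<beta> y) =
      hat T (\<alpha> * \<beta>) (sd_mult l r (hat T \<alpha> x) y + sd_mult l r x (hat T \<beta> y)
        - hat T (\<alpha> * \<beta>) (sd_mult l r x y))
    \<longleftrightarrow> T \<alpha> (snd x) * T \<beta> (snd y) =
      T (\<alpha> * \<beta>) (l (T \<alpha> (snd x)) (snd y) + r (snd x) (T \<beta> (snd y)))"
  by (simp add: hat_def sd_mult_def assms)

theorem proposition2p11:
  fixes sA :: "'k::field \<Rightarrow> 'a::ring \<Rightarrow> 'a"
    and sM :: "'k \<Rightarrow> 'm::ab_group_add \<Rightarrow> 'm"
    and l :: "'a \<Rightarrow> 'm \<Rightarrow> 'm" and r :: "'m \<Rightarrow> 'a \<Rightarrow> 'm"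
    and T :: "'g::semigroup_mult \<Rightarrow> 'm \<Rightarrow> 'a"
  assumes "assoc_algebra sA"
    and "bimodule sA sM l r"
    and "\<And>\<alpha>. Vector_Spaces.linear sM sA (T \<alpha>)"
  shows "O_operator_family sA sM l r T \<longleftrightarrow>
         Nijenhuis_family (sd_scale sA sM) (sd_mult l r) (hat T)"
proof -
  have "vector_space sA" using assms(1) by (simp add: assoc_algebra_def)
  moreover have "vector_space sM" using assms(2) by (simp add: bimodule_def)
  ultimately have linear: "\<And>\<alpha>. Vector_Spaces.linear (sd_scale sA sM) (sd_scale sA sM) (hat T \<alpha>)"
    using linear_hat assms(3) by metis
  note identity_iff = Nijenhuis_identity_hat_iff[of l r,
      OF bimodule_left_action_zero[OF assms(2)] bimodule_right_action_zero[OF assms(2)]]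
  show ?thesis
    unfolding O_operator_family_def Nijenhuis_family_def
  proof (intro iffI conjI allI linear assms(3))
    fix \<alpha> \<beta> x y
    assume "(\<forall>\<alpha>. Vector_Spaces.linear sM sA (T \<alpha>)) \<and>
      (\<forall>\<alpha> \<beta> u v. T \<alpha> u * T \<beta> v = T (\<alpha> * \<beta>) (l (T \<alpha> u) v + r u (T \<beta> v)))"
    then show "sd_mult l r (hat T \<alpha> x) (hat T \<beta> y) =
        hat T (\<alpha> * \<beta>) (sd_mult l r (hat T \<alpha> x) y + sd_mult l r x (hat T \<beta> y)
          - hat T (\<alpha> * \<beta>) (sd_mult l r x y))"
      using identity_iff by blast
  next
    fix \<alpha> \<beta> u v
    assume "(\<forall>\<alpha>. Vector_Spaces.linear (sd_scale sA sM) (sd_scale sA sM) (hat T \<alpha>)) \<and>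
      (\<forall>\<alpha> \<beta> x y. sd_mult l r (hat T \<alpha> x) (hat T \<beta> y) =
        hat T (\<alpha> * \<beta>) (sd_mult l r (hat T \<alpha> x) y + sd_mult l r x (hat T \<beta> y)
          - hat T (\<alpha> * \<beta>) (sd_mult l r x y)))"
    then show "T \<alpha> u * T \<beta> v = T (\<alpha> * \<beta>) (l (T \<alpha> u) v + r u (T \<beta> v))"
      using identity_iff[where x = "(0, u)" and y = "(0, v)", unfolded snd_conv] by blast
  qed
qed

end
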